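(* Let $G$, $H$, the supervisors with $\Sigma_{o,i},\Sigma_{c,i},N_{o,i}$, a controllable event $\sigma\in\Sigma_c$, $N=\max\{N_{o,i}:i\in I^c(\sigma)\}$, and the verifier $V^N_\sigma$ with reachable state set $X^N_\sigma$ be as in the context. Then the following are equivalent: (a) for every $s\in\mathcal{L}(H)$ with $|s|\ge N$, if $s\sigma\in\mathcal{L}(G)\setminus\mathcal{L}(H)$ then for every $(s_i)_{i\in I^c(\sigma)}\in\mathcal{T}^{\sigma}_{conf}(s)$ there exists $i\in I^c(\sigma)$ with $s_i\sigma\notin\mathcal{L}(H^{aug}_{N_{o,i}})$; (b) there is no state $(q,(q_i)_{i\in I^c(\sigma)},N)\in X^N_\sigma$ with $\sigma\in\Gamma(q)\setminus\Gamma_H(q)$ and $\sigma\in\Gamma^{aug}_{H,N_{o,i}}(q_i)$ for all $i\in I^c(\sigma)$.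
   Context: $G=(Q,\Sigma,\delta,\Gamma,q_0,Q_m)$ is a deterministic finite automaton (transition function extended to strings; $\Gamma(q)$ = set of events defined at $q$; $\mathcal{L}(G)$ its generated language). $H=(Q_H,\Sigma,\delta_H,\Gamma_H,q_0,Q_{m,H})$ is a sub-automaton of $G$. For a string $s$, $|s|$ is its length, $s_{-m}$ its prefix of length $\max\{0,|s|-m\}$, $\Sigma^{\le M}$ the strings of length at most $M$. Supervisors $I=\{1,\dots,n\}$: supervisor $i$ has observable events $\Sigma_{o,i}$, $\Sigma_{uo,i}=\Sigma\setminus\Sigma_{o,i}$, controllable events $\Sigma_{c,i}$, delay bound $N_{o,i}\in\mathbb{N}$; $\Sigma_c=\bigcup_i\Sigma_{c,i}$, $I^c(\sigma)=\{i:\sigma\in\Sigma_{c,i}\}$. $P_i$ is natural projection onto $\Sigma_{o,i}^*$; $\Theta_i^{N_{o,i}}(s)=\{P_i(s_{-m}):0\le m\le N_{o,i}\}$. For $s\in\mathcal{L}(H)$, $\mathcal{T}^\sigma_{conf}(s)$ is the set of tuples $(s_i)_{i\in I^c(\sigma)}$ with $P_i(s_i)\in\Theta_i^{N_{o,i}}(s)$ for all $i\in I^c(\sigma)$. Augmented automaton $H^{aug}_N$: states $Q_H\cup\{q_{dis}\}$, initial state $q_0$; for $q\in Q_H$, $e\in\Sigma$: $\delta^{aug}(q,e)=\delta_H(q,e)$ if $e\in\Gamma_H(q)$, $=q_{dis}$ if $e\notin\Gamma_H(q)$ and $e\in\Gamma_H(\delta_H(q,s'))$ for some $s'\in\Sigma^{\le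 N}$ with $\delta_H(q,s')$ defined, undefined otherwise; $q_{dis}$ has no outgoing transitions; $\Gamma^{aug}_{H,N}(q)$ is the set of events defined at $q$ in $H^{aug}_N$. Let $\Xi$ be the set of tuples $(q,(q_i)_{i\in I^c(\sigma)})$ such that there exist $t\in\mathcal{L}(H)$ with $q=\delta_H(q_0,t)$ and, for each $i\in I^c(\sigma)$, $s_i\in\mathcal{L}(H)$ with $q_i=\delta_H(q_0,s_i)$ and $P_i(s_i)=P_i(t)$. Verifier $V^N_\sigma$: states are tuples $(q,(q_i)_{i\in I^c(\sigma)},d)$ with $q,q_i\in Q_H$, $d\in[0,N]$; set of initial states $\{(q,(q_i)_i,0):(q,(q_i)_i)\in\Xi\}$. At a state $(q,(q_i)_i,d)$ and for $e\in\Sigma$, each $i\in I^c(\sigma)$ falls in one case: D1: $N-d>N_{o,i}$, $e\in\Sigma_{o,i}$; D2: $N-d>N_{o,i}$, $e\in\Sigma_{uo,i}$; D3: $N-d\le N_{o,i}$, $\sigma\notin\Gamma^{aug}_{H,N_{o,i}}(q_i)$, $e\in\Sigma_{o,i}$; D4: $N-d\le N_{o,i}$, $\sigma\notin\Gamma^{aug}_{H,N_{o,i}}(q_i)$, $e\in\Sigma_{uo,i}$; D5: $N-d\le N_{o,i}$, $\sigma\in\Gamma^{aug}_{H,N_{o,i}}(q_i)$. Type-1 transition: if $d+1\le N$, $\delta_H(q,e)$ is defined, and $\delta_H(q_i,e)$ is defined for every $i$ in case D1 or D3, there is a transition to $(\delta_H(q,e),(q_i')_i,d+1)$ with $q_i'=\delta_H(q_i,e)$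 for $i$ in D1 or D3 and $q_i'=q_i$ otherwise. Type-2 transition: for each $i$ in case D2 or D4 with $\delta_H(q_i,e)$ defined, there is a transition to the state obtained by replacing $q_i$ by $\delta_H(q_i,e)$, all other components unchanged. $X^N_\sigma$ is the set of states reachable from the initial states. *)

theory Defs
  imports Main
begin

text \<open>Marked states play no role in the statement and are omitted.\<close>

definition dfa :: "'q set \<Rightarrow> 'e set \<Rightarrow> ('q \<Rightarrow> 'e \<Rightarrow> 'q option) \<Rightarrow> 'q \<Rightarrow> bool" where
  "dfa Q Sig d q0 \<longleftrightarrow> finite Q \<and> finite Sig \<and> q0 \<in> Q \<and>
     (\<forall>q e q'. d q e = Some q' \<longrightarrow> q \<in> Q \<and> e \<in> Sig \<and> q' \<in> Q)"

definition sub_automaton ::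
  "'q set \<Rightarrow> ('q \<Rightarrow> 'e \<Rightarrow> 'q option) \<Rightarrow> 'q set \<Rightarrow> ('q \<Rightarrow> 'e \<Rightarrow> 'q option) \<Rightarrow> bool" where
  "sub_automaton QH dH Q d \<longleftrightarrow> QH \<subseteq> Q \<and> (\<forall>q e q'. dH q e = Some q' \<longrightarrow> d q e = Some q')"

fun run :: "('q \<Rightarrow> 'e \<Rightarrow> 'q option) \<Rightarrow> 'q \<Rightarrow> 'e list \<Rightarrow> 'q option" where
  "run d q [] = Some q"
| "run d q (e # s) = (case d q e of None \<Rightarrow> None | Some q' \<Rightarrow> run d q' s)"

definition lang :: "('q \<Rightarrow> 'e \<Rightarrow> 'q option) \<Rightarrow> 'q \<Rightarrow> 'e list set" where
  "lang d q0 = {s. run d q0 s \<noteq> None}"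

definition Gam :: "('q \<Rightarrow> 'e \<Rightarrow> 'q option) \<Rightarrow> 'q \<Rightarrow> 'e set" where
  "Gam d q = {e. d q e \<noteq> None}"

datatype 'q aug_state = Orig 'q | Dis

fun delta_aug :: "'e set \<Rightarrow> ('q \<Rightarrow> 'e \<Rightarrow> 'q option) \<Rightarrow> nat \<Rightarrow> 'q aug_state \<Rightarrow> 'e \<Rightarrow> 'q aug_state option" where
  "delta_aug Sig dH N (Orig q) e =
     (if dH q e \<noteq> None then map_option Orig (dH q e)
      else if e \<in> Sig \<and> (\<exists>s' q'. s' \<in> lists Sig \<and> length s' \<le> N \<and> run dH q s' = Some q' \<and> dH q' e \<noteq> None)
      then Some Dis else None)"
| "delta_aug Sig dH N Dis e = None"

definition lang_aug :: "'e set \<Rightarrow> ('q \<Rightarrow> 'e \<Rightarrow> 'q option) \<Rightarrow> 'q \<Rightarrow> nat \<Rightarrow> 'e list set" where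
  "lang_aug Sig dH q0 N = lang (delta_aug Sig dH N) (Orig q0)"

definition Gam_aug :: "'e set \<Rightarrow> ('q \<Rightarrow> 'e \<Rightarrow> 'q option) \<Rightarrow> nat \<Rightarrow> 'q \<Rightarrow> 'e set" where
  "Gam_aug Sig dH N q = Gam (delta_aug Sig dH N) (Orig q)"

definition proj :: "'e set \<Rightarrow> 'e list \<Rightarrow> 'e list" where
  "proj So s = filter (\<lambda>e. e \<in> So) s"

text \<open>s_{-m}: prefix of length max 0 (|s| - m).\<close>
definition trunc :: "'e list \<Rightarrow> nat \<Rightarrow> 'e list" where
  "trunc s m = take (length s - m) s"

definition Theta :: "'e set \<Rightarrow> nat \<Rightarrow> 'e list \<Rightarrow> 'e list set" where
  "Theta So No s = {proj So (trunc s m) | m. m \<le> No}"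

definition Ic :: "nat \<Rightarrow> (nat \<Rightarrow> 'e set) \<Rightarrow> 'e \<Rightarrow> nat set" where
  "Ic n Sc \<sigma> = {i \<in> {1..n}. \<sigma> \<in> Sc i}"

text \<open>Tuples (s_i)_{i in Ic} are represented by functions nat => 'e list; only the
  values on Ic matter.\<close>
definition Tconf :: "'e set \<Rightarrow> nat set \<Rightarrow> (nat \<Rightarrow> 'e set) \<Rightarrow> (nat \<Rightarrow> nat) \<Rightarrow> 'e list \<Rightarrow> (nat \<Rightarrow> 'e list) set" where
  "Tconf Sig I So No s = {f. \<forall>i\<in>I. f i \<in> lists Sig \<and> proj (So i) (f i) \<in> Theta (So i) (No i) s}"

text \<open>States are triples (q, qs, d); qs is a tuple indexed by I (values outside I are
  irrelevant and never change).\<close>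

definition Xi :: "('q \<Rightarrow> 'e \<Rightarrow> 'q option) \<Rightarrow> 'q \<Rightarrow> nat set \<Rightarrow> (nat \<Rightarrow> 'e set) \<Rightarrow> ('q \<times> (nat \<Rightarrow> 'q)) set" where
  "Xi dH q0 I So = {(q, qs). \<exists>t. run dH q0 t = Some q \<and>
      (\<forall>i\<in>I. \<exists>si. run dH q0 si = Some (qs i) \<and> proj (So i) si = proj (So i) t)}"

text \<open>i is in case D1 or D3 (tracks e) / D2 or D4 (moves alone on e).\<close>
definition tracks :: "'e set \<Rightarrow> ('q \<Rightarrow> 'e \<Rightarrow> 'q option) \<Rightarrow> (nat \<Rightarrow> 'e set) \<Rightarrow> (nat \<Rightarrow> nat) \<Rightarrow> 'e \<Rightarrow> nat
     \<Rightarrow> (nat \<Rightarrow> 'q) \<Rightarrow> nat \<Rightarrow> 'e \<Rightarrow> nat \<Rightarrow> bool" where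
  "tracks Sig dH So No \<sigma> N qs d e i \<longleftrightarrow>
     ((N - d > No i \<and> e \<in> So i) \<or>
      (N - d \<le> No i \<and> \<sigma> \<notin> Gam_aug Sig dH (No i) (qs i) \<and> e \<in> So i))"

definition free :: "'e set \<Rightarrow> ('q \<Rightarrow> 'e \<Rightarrow> 'q option) \<Rightarrow> (nat \<Rightarrow> 'e set) \<Rightarrow> (nat \<Rightarrow> nat) \<Rightarrow> 'e \<Rightarrow> nat
     \<Rightarrow> (nat \<Rightarrow> 'q) \<Rightarrow> nat \<Rightarrow> 'e \<Rightarrow> nat \<Rightarrow> bool" where
  "free Sig dH So No \<sigma> N qs d e i \<longleftrightarrow>
     ((N - d > No i \<and> e \<in> Sig - So i) \<or>
      (N - d \<le> No i \<and> \<sigma> \<notin> Gam_aug Sig dH (No i) (qs i) \<and> e \<in> Sig - So i))"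

inductive_set verifier_reach ::
  "'e set \<Rightarrow> ('q \<Rightarrow> 'e \<Rightarrow> 'q option) \<Rightarrow> 'q \<Rightarrow> nat set \<Rightarrow> (nat \<Rightarrow> 'e set) \<Rightarrow> (nat \<Rightarrow> nat) \<Rightarrow> 'e \<Rightarrow> nat
     \<Rightarrow> ('q \<times> (nat \<Rightarrow> 'q) \<times> nat) set"
  for Sig dH q0 I So No \<sigma> N where
  init: "(q, qs) \<in> Xi dH q0 I So \<Longrightarrow> (q, qs, 0) \<in> verifier_reach Sig dH q0 I So No \<sigma> N"
| type1: "\<lbrakk> (q, qs, d) \<in> verifier_reach Sig dH q0 I So No \<sigma> N; e \<in> Sig; d + 1 \<le> N;
           dH q e = Some q';
           \<forall>i\<in>I. tracks Sig dH So No \<sigma> N qs d e i \<longrightarrow> dH (qs i) e \<noteq> None \<rbrakk>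
   \<Longrightarrow> (q', (\<lambda>i. if i \<in> I \<and> tracks Sig dH So No \<sigma> N qs d e i then the (dH (qs i) e) else qs i), d + 1)
        \<in> verifier_reach Sig dH q0 I So No \<sigma> N"
| type2: "\<lbrakk> (q, qs, d) \<in> verifier_reach Sig dH q0 I So No \<sigma> N; e \<in> Sig; i \<in> I;
           free Sig dH So No \<sigma> N qs d e i; dH (qs i) e = Some qi' \<rbrakk>
   \<Longrightarrow> (q, qs(i := qi'), d) \<in> verifier_reach Sig dH q0 I So No \<sigma> N"

end

theory Submission
  imports Defs
begin

(*
A reachable verifier state (q, qs, k) is explained by a string s with k <= |s| leading H to q,
together with strings s_i leading H to qs i that supervisor i cannot tell apart from s. A
component in case D5 stays put while s grows, but it only enters D5 after step N - N_{o,i},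
so at step N its string is observed like a prefix of s that is at most N_{o,i} events shorter.
Hence a reachable state violating (b) yields a string and a conforming tuple violating (a).

Conversely, given s and a conforming tuple (s_i) whose members all enable sigma in the
augmented automata, the verifier replays the last N events of s by type-1 transitions,
letting every active component consume the unobservable events of its s_i by type-2
transitions before each of them. A component that is still active once the verifier has read
past the prefix of s that s_i is observed against must have consumed all of s_i, so it
enables sigma; thus at step N every component is in case D5.
*)

lemma run_append: "run d q (a @ b) = (case run d q a of None \<Rightarrow> None | Some p \<Rightarrow> run d p b)"
  by (induction a arbitrary: q) (auto split: option.splits)

lemma run_snoc: "run d q a = Some p \<Longrightarrow> run d q (a @ [e]) = d p e"
  by (simp add: run_append split: option.split)

lemma run_take: "run d q w \<noteq> None \<Longrightarrow> run d q (take j w) \<noteq> None"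
  by (metis append_take_drop_id option.case(1) run_append)

lemma run_lists: "dfa Q Sig d q0 \<Longrightarrow> run d q s = Some p \<Longrightarrow> s \<in> lists Sig"
  by (induction s arbitrary: q) (auto simp: dfa_def split: option.splits)

lemma run_sub_automaton: "sub_automaton QH dH Q d \<Longrightarrow> run dH q s = Some p \<Longrightarrow> run d q s = Some p"
  by (induction s arbitrary: q) (auto simp: sub_automaton_def split: option.splits)

lemma lang_snoc_iff: "s @ [e] \<in> lang d q0 \<longleftrightarrow> (\<exists>p. run d q0 s = Some p \<and> e \<in> Gam d p)"
  by (auto simp: lang_def Gam_def run_append split: option.splits)

lemma run_delta_aug_Orig:
  "run dH q s = Some p \<Longrightarrow> run (delta_aug Sig dH M) (Orig q) s = Some (Orig p)"
  by (induction s arbitrary: q) (auto split: option.splits)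

lemma run_delta_aug_cases:
  "run (delta_aug Sig dH M) (Orig q) s = Some x \<Longrightarrow> x = Dis \<or> (\<exists>p. x = Orig p \<and> run dH q s = Some p)"
proof (induction s arbitrary: q)
  case (Cons e s)
  show ?case
  proof (cases "dH q e")
    case None
    with Cons.prems have "run (delta_aug Sig dH M) Dis s = Some x"
      by (simp split: if_splits)
    then show ?thesis
      by (cases s) auto
  next
    case (Some q')
    with Cons.prems Cons.IH[of q'] show ?thesis
      by simp
  qed
qed simp

lemma lang_aug_snoc_iff:
  "w @ [\<sigma>] \<in> lang_aug Sig dH q0 M \<longleftrightarrow> (\<exists>p. run dH q0 w = Some p \<and> \<sigma> \<in> Gam_aug Sig dH M p)"
proof
  assume "w @ [\<sigma>] \<in> lang_aug Sig dH q0 M"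
  then obtain x where x: "run (delta_aug Sig dH M) (Orig q0) w = Some x"
    and enabled: "\<sigma> \<in> Gam (delta_aug Sig dH M) x"
    unfolding lang_aug_def lang_snoc_iff by blast
  have "x \<noteq> Dis"
    using enabled by (auto simp: Gam_def)
  with run_delta_aug_cases[OF x] enabled show "\<exists>p. run dH q0 w = Some p \<and> \<sigma> \<in> Gam_aug Sig dH M p"
    by (auto simp: Gam_aug_def)
next
  assume "\<exists>p. run dH q0 w = Some p \<and> \<sigma> \<in> Gam_aug Sig dH M p"
  then show "w @ [\<sigma>] \<in> lang_aug Sig dH q0 M"
    unfolding lang_aug_def lang_snoc_iff Gam_aug_def by (blast dest: run_delta_aug_Orig)
qed

lemma proj_Nil [simp]: "proj S [] = []"
  by (simp add: proj_def)

lemma proj_Cons [simp]: "proj S (x # r) = (if x \<in> S then x # proj S r else proj S r)"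
  by (simp add: proj_def)

lemma proj_append [simp]: "proj S (a @ b) = proj S a @ proj S b"
  by (simp add: proj_def)

lemma proj_take_drop: "proj S w = proj S (take j w) @ proj S (drop j w)"
  by (metis append_take_drop_id proj_append)

lemma proj_take_eq_prefix: "proj S w = a @ b \<Longrightarrow> \<exists>j\<le>length w. proj S (take j w) = a"
proof (induction w arbitrary: a)
  case (Cons x w)
  consider "a = []" | "a \<noteq> []" "x \<notin> S" | a' where "a = x # a'" "x \<in> S"
    using Cons.prems by (cases a) (auto split: if_splits)
  then show ?case
  proof cases
    case 1
    then show ?thesis
      by (intro exI[of _ 0]) simp
  next
    case 2
    with Cons obtain j where "j \<le> length w" "proj S (take j w) = a"
      by auto
    with 2 show ?thesis
      by (intro exI[of _ "Suc j"]) simp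
  next
    case 3
    with Cons obtain j where "j \<le> length w" "proj S (take j w) = a'"
      by auto
    with 3 show ?thesis
      by (intro exI[of _ "Suc j"]) simp
  qed
qed simp

lemma proj_drop_observable:
  assumes "p < length w \<Longrightarrow> w ! p \<in> S"
  shows "proj S (drop p w) = (if p < length w then w ! p # proj S (drop (Suc p) w) else [])"
  using assms by (auto simp: Cons_nth_drop_Suc[symmetric])

lemma trunc_0 [simp]: "trunc s 0 = s"
  by (simp add: trunc_def)

lemma trunc_snoc_Suc: "trunc (s @ [e]) (Suc m) = trunc s m"
  by (simp add: trunc_def)

lemma trunc_prefix: "j \<le> j' \<Longrightarrow> \<exists>c. trunc s j = trunc s j' @ c"
  unfolding trunc_def by (metis diff_le_mono2 le_add_diff_inverse take_add)

lemma trunc_prefix_nth: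
  assumes "j < j'" "j' \<le> length s"
  shows "\<exists>c. trunc s j = trunc s j' @ s ! (length s - j') # c"
proof -
  define a where "a = length s - j'"
  have "a < length s" "length s - j = a + Suc (j' - Suc j)"
    using assms unfolding a_def by linarith+
  then have "trunc s j = trunc s j' @ take (Suc (j' - Suc j)) (s ! a # drop (Suc a) s)"
    unfolding trunc_def a_def[symmetric] by (simp only: take_add Cons_nth_drop_Suc)
  then show ?thesis
    unfolding a_def by auto
qed

lemma trunc_Suc_snoc:
  assumes "j < length s"
  shows "trunc s j = trunc s (Suc j) @ [s ! (length s - Suc j)]"
proof -
  have "length s - j = Suc (length s - Suc j)"
    using assms by simp
  then show ?thesis
    unfolding trunc_def using assms by (simp add: take_Suc_conv_app_nth)
qed

locale verifier =
  fixes Sig :: "'e set" and dH :: "'q \<Rightarrow> 'e \<Rightarrow> 'q option" and q0 :: 'q and I :: "nat set"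
    and So :: "nat \<Rightarrow> 'e set" and No :: "nat \<Rightarrow> nat" and \<sigma> :: 'e and N :: nat
begin

abbreviation reach :: "('q \<times> (nat \<Rightarrow> 'q) \<times> nat) set" where
  "reach \<equiv> verifier_reach Sig dH q0 I So No \<sigma> N"

text \<open>Case D5: component \<open>i\<close> no longer moves. In the other cases it tracks (D1, D3) or
  moves alone on (D2, D4) an event according to whether supervisor \<open>i\<close> observes it.\<close>

definition frozen :: "nat \<Rightarrow> nat \<Rightarrow> 'q \<Rightarrow> bool" where
  "frozen k i p \<longleftrightarrow> N - k \<le> No i \<and> \<sigma> \<in> Gam_aug Sig dH (No i) p"

lemma tracks_iff: "tracks Sig dH So No \<sigma> N qs k e i \<longleftrightarrow> e \<in> So i \<and> \<not> frozen k i (qs i)"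
  unfolding tracks_def frozen_def by auto

lemma free_iff: "free Sig dH So No \<sigma> N qs k e i \<longleftrightarrow> e \<in> Sig - So i \<and> \<not> frozen k i (qs i)"
  unfolding free_def frozen_def by auto

lemma frozen_Suc: "frozen k i p \<Longrightarrow> frozen (Suc k) i p"
  unfolding frozen_def by auto

definition witnesses :: "'e list \<Rightarrow> nat \<Rightarrow> nat \<Rightarrow> 'q \<Rightarrow> 'e list \<Rightarrow> bool" where
  "witnesses s k i p si \<longleftrightarrow> run dH q0 si = Some p \<and>
     (proj (So i) si = proj (So i) s \<or>
      frozen k i p \<and> (\<exists>m. m + N \<le> k + No i \<and> proj (So i) si = proj (So i) (trunc s m)))"

lemma witnesses_frozen_delay:
  assumes "witnesses s k i p si" "frozen k i p"
  obtains m where "m + N \<le> k + No i" "proj (So i) si = proj (So i) (trunc s m)"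
proof (cases "proj (So i) si = proj (So i) s")
  case True
  with assms(2) show ?thesis
    unfolding frozen_def by (intro that[of 0]) auto
next
  case False
  with assms(1) show ?thesis
    unfolding witnesses_def by (blast intro: that)
qed

lemma witnesses_frozen_snoc:
  assumes "witnesses s k i p si" "frozen k i p"
  shows "witnesses (s @ [e]) (Suc k) i p si"
proof -
  obtain m where "m + N \<le> k + No i" "proj (So i) si = proj (So i) (trunc s m)"
    using witnesses_frozen_delay[OF assms] .
  then have "Suc m + N \<le> Suc k + No i" "proj (So i) si = proj (So i) (trunc (s @ [e]) (Suc m))"
    by (simp_all add: trunc_snoc_Suc)
  with assms show ?thesis
    unfolding witnesses_def by (blast intro: frozen_Suc)
qed

lemma reach_witnesses:
  "(q, qs, k) \<in> reach \<Longrightarrow>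
   \<exists>s. run dH q0 s = Some q \<and> k \<le> length s \<and> (\<forall>i\<in>I. \<exists>si. witnesses s k i (qs i) si)"
proof (induction rule: verifier_reach.induct)
  case (init q qs)
  then show ?case
    unfolding Xi_def witnesses_def by fastforce
next
  case (type1 q qs k e q')
  then obtain s where s: "run dH q0 s = Some q" "k \<le> length s"
    and wit: "\<forall>i\<in>I. \<exists>si. witnesses s k i (qs i) si"
    by blast
  let ?qs' = "\<lambda>i. if i \<in> I \<and> tracks Sig dH So No \<sigma> N qs k e i then the (dH (qs i) e) else qs i"
  have "\<exists>si. witnesses (s @ [e]) (Suc k) i (?qs' i) si" if i: "i \<in> I" for i
  proof -
    obtain si where si: "witnesses s k i (qs i) si"
      using wit i by blast
    consider "e \<in> So i" "\<not> frozen k i (qs i)" | "frozen k i (qs i)" | "e \<notin> So i" "\<not> frozen k i (qs i)"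
      by blast
    then show ?thesis
    proof cases
      case 1
      with type1.hyps i obtain p where "dH (qs i) e = Some p"
        by (auto simp: tracks_iff)
      with 1 si i show ?thesis
        by (intro exI[of _ "si @ [e]"]) (auto simp: witnesses_def tracks_iff run_snoc)
    next
      case 2
      then show ?thesis
        using witnesses_frozen_snoc[OF si 2] by (auto simp: tracks_iff)
    next
      case 3
      with si show ?thesis
        by (intro exI[of _ si]) (auto simp: witnesses_def tracks_iff)
    qed
  qed
  with s type1.hyps show ?case
    by (intro exI[of _ "s @ [e]"]) (auto simp: run_snoc)
next
  case (type2 q qs k e i p)
  then obtain s where s: "run dH q0 s = Some q" "k \<le> length s"
    and wit: "\<forall>i\<in>I. \<exists>si. witnesses s k i (qs i) si"
    by blast
  obtain si where "run dH q0 si = Some (qs i)" "proj (So i) si = proj (So i) s"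
    using wit type2.hyps unfolding witnesses_def free_iff by blast
  with type2.hyps have "witnesses s k i p (si @ [e])"
    by (auto simp: witnesses_def free_iff run_snoc)
  with s wit show ?case
    by auto
qed

lemma conforming_tuple_of_reach:
  assumes H: "dfa QH Sig dH q0" and reach: "(q, qs, N) \<in> reach"
    and enabled: "\<forall>i\<in>I. \<sigma> \<in> Gam_aug Sig dH (No i) (qs i)"
  shows "\<exists>s f. run dH q0 s = Some q \<and> N \<le> length s \<and> f \<in> Tconf Sig I So No s \<and>
           (\<forall>i\<in>I. f i @ [\<sigma>] \<in> lang_aug Sig dH q0 (No i))"
proof -
  obtain s where s: "run dH q0 s = Some q" "N \<le> length s"
    and "\<forall>i\<in>I. \<exists>si. witnesses s N i (qs i) si"
    using reach_witnesses[OF reach] by blast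
  then obtain f where f: "\<forall>i\<in>I. witnesses s N i (qs i) (f i)"
    by metis
  have "proj (So i) (f i) \<in> Theta (So i) (No i) s" if i: "i \<in> I" for i
  proof -
    have "frozen N i (qs i)"
      using enabled i unfolding frozen_def by simp
    with f i obtain m where "m + N \<le> N + No i" "proj (So i) (f i) = proj (So i) (trunc s m)"
      using witnesses_frozen_delay by blast
    then show ?thesis
      unfolding Theta_def by auto
  qed
  moreover have "f i \<in> lists Sig" if "i \<in> I" for i
    using f that run_lists[OF H] unfolding witnesses_def by blast
  ultimately have "f \<in> Tconf Sig I So No s"
    unfolding Tconf_def by blast
  moreover have "f i @ [\<sigma>] \<in> lang_aug Sig dH q0 (No i)" if "i \<in> I" for i
    using f enabled that unfolding lang_aug_snoc_iff witnesses_def by blast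
  ultimately show ?thesis
    using s by blast
qed

end

locale verifier_simulation = verifier Sig dH q0 I So No \<sigma> N
  for Sig :: "'e set" and dH :: "'q \<Rightarrow> 'e \<Rightarrow> 'q option" and q0 I So No \<sigma> N +
  fixes s :: "'e list" and w :: "nat \<Rightarrow> 'e list" and m :: "nat \<Rightarrow> nat" and pe :: "nat \<Rightarrow> 'q"
  assumes finite_I: "finite I"
    and s_lists: "s \<in> lists Sig" and s_run: "run dH q0 s \<noteq> None" and N_le_length: "N \<le> length s"
    and w_lists: "i \<in> I \<Longrightarrow> w i \<in> lists Sig"
    and m_le_No: "i \<in> I \<Longrightarrow> m i \<le> No i" and No_le_N: "i \<in> I \<Longrightarrow> No i \<le> N"
    and proj_w: "i \<in> I \<Longrightarrow> proj (So i) (w i) = proj (So i) (trunc s (m i))"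
    and run_w: "i \<in> I \<Longrightarrow> run dH q0 (w i) = Some (pe i)"
    and enabled_w: "i \<in> I \<Longrightarrow> \<sigma> \<in> Gam_aug Sig dH (No i) (pe i)"
begin

definition simulates :: "nat \<Rightarrow> 'q \<Rightarrow> (nat \<Rightarrow> 'q) \<Rightarrow> (nat \<Rightarrow> nat) \<Rightarrow> bool" where
  "simulates k q qs pl \<longleftrightarrow> run dH q0 (trunc s (N - k)) = Some q \<and>
     (\<forall>i\<in>I. pl i \<le> length (w i) \<and> run dH q0 (take (pl i) (w i)) = Some (qs i) \<and>
        (frozen k i (qs i) \<or> proj (So i) (take (pl i) (w i)) = proj (So i) (trunc s (N - k))))"

definition saturated :: "nat \<Rightarrow> (nat \<Rightarrow> 'q) \<Rightarrow> (nat \<Rightarrow> nat) \<Rightarrow> bool" where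
  "saturated k qs pl \<longleftrightarrow> (\<forall>i\<in>I. \<not> frozen k i (qs i) \<longrightarrow> pl i < length (w i) \<longrightarrow> w i ! pl i \<in> So i)"

lemma run_take_w: "i \<in> I \<Longrightarrow> run dH q0 (take j (w i)) \<noteq> None"
  using run_take run_w by (metis option.distinct(1))

text \<open>An active saturated component that has been fed everything \<open>w i\<close> is observed against
  has consumed all of \<open>w i\<close>, so it sits in \<open>pe i\<close>, where \<open>\<sigma>\<close> is enabled.\<close>

lemma simulates_caught_up_frozen:
  assumes sim: "simulates k q qs pl" and sat: "saturated k qs pl" and i: "i \<in> I"
    and caught_up: "N - k \<le> m i"
  shows "frozen k i (qs i)"
proof (rule ccontr)
  assume active: "\<not> frozen k i (qs i)"
  with sim i have run_pl: "run dH q0 (take (pl i) (w i)) = Some (qs i)"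
    and proj_pl: "proj (So i) (take (pl i) (w i)) = proj (So i) (trunc s (N - k))"
    unfolding simulates_def by auto
  obtain c where "trunc s (N - k) = trunc s (m i) @ c"
    using trunc_prefix[OF caught_up] by blast
  with proj_pl proj_w[OF i] have "proj (So i) (take (pl i) (w i)) =
      proj (So i) (take (pl i) (w i)) @ proj (So i) (drop (pl i) (w i)) @ proj (So i) c"
    using proj_take_drop[of "So i" "w i" "pl i"] by simp
  then have "proj (So i) (drop (pl i) (w i)) = []"
    by simp
  with sat active i have "take (pl i) (w i) = w i"
    unfolding saturated_def using proj_drop_observable[of "pl i" "w i" "So i"]
    by (auto split: if_splits)
  with run_pl run_w[OF i] enabled_w[OF i] m_le_No[OF i] caught_up have "frozen k i (qs i)"
    unfolding frozen_def by auto
  with active show False ..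
qed

lemma simulates_unobservable_step:
  assumes reach: "(q, qs, k) \<in> reach" and sim: "simulates k q qs pl" and i: "i \<in> I"
    and active: "\<not> frozen k i (qs i)" and pl: "pl i < length (w i)" and unobs: "w i ! pl i \<notin> So i"
  shows "\<exists>p. (q, qs(i := p), k) \<in> reach \<and> simulates k q (qs(i := p)) (pl(i := Suc (pl i)))"
proof -
  define e where "e = w i ! pl i"
  have e: "e \<in> Sig"
    using w_lists[OF i] pl unfolding e_def by (auto dest: nth_mem)
  have take_Suc: "take (Suc (pl i)) (w i) = take (pl i) (w i) @ [e]"
    using pl unfolding e_def by (simp add: take_Suc_conv_app_nth)
  obtain p where p: "run dH q0 (take (Suc (pl i)) (w i)) = Some p"
    using run_take_w[OF i] by blast
  with sim i take_Suc have step: "dH (qs i) e = Some p"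
    unfolding simulates_def by (simp add: run_snoc)
  have "(q, qs(i := p), k) \<in> reach"
    using reach e i step active unobs unfolding e_def
    by (intro verifier_reach.type2) (auto simp: free_iff)
  moreover have "simulates k q (qs(i := p)) (pl(i := Suc (pl i)))"
    using sim pl p take_Suc active unobs unfolding simulates_def e_def by auto
  ultimately show ?thesis
    by blast
qed

lemma reach_saturate:
  "(q, qs, k) \<in> reach \<Longrightarrow> simulates k q qs pl \<Longrightarrow>
   \<exists>qs' pl'. (q, qs', k) \<in> reach \<and> simulates k q qs' pl' \<and> saturated k qs' pl'"
proof (induction "\<Sum>i\<in>I. length (w i) - pl i" arbitrary: qs pl rule: less_induct)
  case less
  show ?case
  proof (cases "saturated k qs pl")
    case False
    then obtain i where i: "i \<in> I" "\<not> frozen k i (qs i)" "pl i < length (w i)" "w i ! pl i \<notin> So i"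
      unfolding saturated_def by blast
    with less.prems obtain p where "(q, qs(i := p), k) \<in> reach"
      and "simulates k q (qs(i := p)) (pl(i := Suc (pl i)))"
      using simulates_unobservable_step by blast
    moreover have "(\<Sum>j\<in>I. length (w j) - (pl(i := Suc (pl i))) j) < (\<Sum>j\<in>I. length (w j) - pl j)"
      using i by (intro sum_strict_mono_ex1[OF finite_I]) auto
    ultimately show ?thesis
      using less.hyps by blast
  qed (use less.prems in blast)
qed

lemma simulates_tracking_next:
  assumes sim: "simulates k q qs pl" and sat: "saturated k qs pl" and i: "i \<in> I"
    and active: "\<not> frozen k i (qs i)" and k: "k < N" and obs: "s ! (length s - (N - k)) \<in> So i"
  shows "pl i < length (w i) \<and> w i ! pl i = s ! (length s - (N - k))"
proof -
  have "m i < N - k"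
    using simulates_caught_up_frozen[OF sim sat i] active by (meson not_le)
  moreover have "N - k \<le> length s"
    using N_le_length by linarith
  ultimately obtain c where "trunc s (m i) = trunc s (N - k) @ s ! (length s - (N - k)) # c"
    using trunc_prefix_nth by blast
  with sim i active obs proj_w[OF i] have
    "proj (So i) (drop (pl i) (w i)) = s ! (length s - (N - k)) # proj (So i) c"
    using proj_take_drop[of "So i" "w i" "pl i"] unfolding simulates_def by auto
  with sat i active show ?thesis
    unfolding saturated_def using proj_drop_observable[of "pl i" "w i" "So i"]
    by (auto split: if_splits)
qed

lemma reach_observable_step:
  assumes reach: "(q, qs, k) \<in> reach" and sim: "simulates k q qs pl" and sat: "saturated k qs pl"
    and k: "k < N"
  shows "\<exists>q' qs' pl'. (q', qs', Suc k) \<in> reach \<and> simulates (Suc k) q' qs' pl'"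
proof -
  define e where "e = s ! (length s - (N - k))"
  have trunc_Suc: "trunc s (N - Suc k) = trunc s (N - k) @ [e]"
    using trunc_Suc_snoc[of "N - Suc k" s] k N_le_length unfolding e_def
    by (simp add: Suc_diff_Suc)
  have e: "e \<in> Sig"
    using s_lists k N_le_length unfolding e_def by (auto dest: nth_mem)
  obtain q' where q': "run dH q0 (trunc s (N - Suc k)) = Some q'"
    using run_take[OF s_run] unfolding trunc_def by blast
  with sim trunc_Suc have step: "dH q e = Some q'"
    unfolding simulates_def by (simp add: run_snoc)
  let ?tracking = "\<lambda>i. i \<in> I \<and> e \<in> So i \<and> \<not> frozen k i (qs i)"
  have next_e: "pl i < length (w i) \<and> take (Suc (pl i)) (w i) = take (pl i) (w i) @ [e]"
    if "?tracking i" for i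
    using simulates_tracking_next[OF sim sat _ _ k] that unfolding e_def
    by (simp add: take_Suc_conv_app_nth)
  have tracked: "\<exists>p. dH (qs i) e = Some p \<and> run dH q0 (take (Suc (pl i)) (w i)) = Some p"
    if "?tracking i" for i
    using sim next_e[OF that] run_take_w[of i "Suc (pl i)"] that unfolding simulates_def
    by (auto simp: run_snoc)
  define qs' where "qs' i = (if ?tracking i then the (dH (qs i) e) else qs i)" for i
  define pl' where "pl' i = (if ?tracking i then Suc (pl i) else pl i)" for i
  have "\<forall>i\<in>I. tracks Sig dH So No \<sigma> N qs k e i \<longrightarrow> dH (qs i) e \<noteq> None"
    using tracked by (auto simp: tracks_iff)
  then have "(q', qs', Suc k) \<in> reach"
    using verifier_reach.type1[OF reach e _ step] k unfolding qs'_def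
    by (simp add: tracks_iff)
  moreover have "simulates (Suc k) q' qs' pl'"
    unfolding simulates_def
  proof (rule conjI[OF q' ballI])
    fix i assume i: "i \<in> I"
    show "pl' i \<le> length (w i) \<and> run dH q0 (take (pl' i) (w i)) = Some (qs' i) \<and>
      (frozen (Suc k) i (qs' i) \<or> proj (So i) (take (pl' i) (w i)) = proj (So i) (trunc s (N - Suc k)))"
    proof (cases "?tracking i")
      case True
      with sim tracked[OF True] next_e[OF True] trunc_Suc show ?thesis
        unfolding simulates_def qs'_def pl'_def by auto
    next
      case False
      with sim i trunc_Suc show ?thesis
        unfolding simulates_def qs'_def pl'_def by (auto intro: frozen_Suc)
    qed
  qed
  ultimately show ?thesis
    by blast
qed

lemma reach_simulates_start: "\<exists>q qs pl. (q, qs, 0) \<in> reach \<and> simulates 0 q qs pl"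
proof -
  obtain q where q: "run dH q0 (trunc s N) = Some q"
    using run_take[OF s_run] unfolding trunc_def by blast
  have "\<exists>j\<le>length (w i). proj (So i) (take j (w i)) = proj (So i) (trunc s N)" if i: "i \<in> I" for i
  proof -
    obtain c where "trunc s (m i) = trunc s N @ c"
      using trunc_prefix m_le_No[OF i] No_le_N[OF i] by (meson order_trans)
    then show ?thesis
      using proj_w[OF i] proj_take_eq_prefix by simp
  qed
  then obtain pl where pl: "\<forall>i\<in>I. pl i \<le> length (w i) \<and>
      proj (So i) (take (pl i) (w i)) = proj (So i) (trunc s N)"
    by metis
  define qs where "qs i = the (run dH q0 (take (pl i) (w i)))" for i
  have qs: "run dH q0 (take (pl i) (w i)) = Some (qs i)" if "i \<in> I" for i
    using run_take_w[OF that] unfolding qs_def by auto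
  have "(q, qs) \<in> Xi dH q0 I So"
    unfolding Xi_def using q qs pl by blast
  then have "(q, qs, 0) \<in> reach"
    by (rule verifier_reach.init)
  moreover have "simulates 0 q qs pl"
    unfolding simulates_def using q qs pl by simp
  ultimately show ?thesis
    by blast
qed

lemma reach_simulates:
  "k \<le> N \<Longrightarrow> \<exists>q qs pl. (q, qs, k) \<in> reach \<and> simulates k q qs pl \<and> saturated k qs pl"
proof (induction k)
  case 0
  then show ?case
    using reach_simulates_start reach_saturate by blast
next
  case (Suc k)
  then obtain q qs pl where "(q, qs, k) \<in> reach" "simulates k q qs pl" "saturated k qs pl"
    by auto
  with Suc.prems show ?case
    using reach_observable_step reach_saturate by (metis Suc_le_eq)
qed

lemma reach_all_enabled:
  assumes "run dH q0 s = Some q"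
  shows "\<exists>qs. (q, qs, N) \<in> reach \<and> (\<forall>i\<in>I. \<sigma> \<in> Gam_aug Sig dH (No i) (qs i))"
proof -
  obtain q' qs pl where "(q', qs, N) \<in> reach" and sim: "simulates N q' qs pl" and "saturated N qs pl"
    using reach_simulates by blast
  moreover have "q' = q"
    using sim assms unfolding simulates_def by simp
  moreover have "frozen N i (qs i)" if "i \<in> I" for i
    using simulates_caught_up_frozen[OF sim] that \<open>saturated N qs pl\<close> by simp
  ultimately show ?thesis
    unfolding frozen_def by blast
qed

end

lemma (in verifier) reach_of_conforming_tuple:
  assumes "finite I" and "\<forall>i\<in>I. No i \<le> N"
    and "s \<in> lists Sig" and run_s: "run dH q0 s = Some q" and "N \<le> length s"
    and f: "f \<in> Tconf Sig I So No s" and enabled: "\<forall>i\<in>I. f i @ [\<sigma>] \<in> lang_aug Sig dH q0 (No i)"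
  shows "\<exists>qs. (q, qs, N) \<in> reach \<and> (\<forall>i\<in>I. \<sigma> \<in> Gam_aug Sig dH (No i) (qs i))"
proof -
  have "\<forall>i\<in>I. \<exists>m. m \<le> No i \<and> proj (So i) (f i) = proj (So i) (trunc s m)"
    using f unfolding Tconf_def Theta_def by blast
  then obtain m where m: "\<forall>i\<in>I. m i \<le> No i \<and> proj (So i) (f i) = proj (So i) (trunc s (m i))"
    by (metis bchoice)
  obtain pe where pe: "\<forall>i\<in>I. run dH q0 (f i) = Some (pe i) \<and> \<sigma> \<in> Gam_aug Sig dH (No i) (pe i)"
    using bchoice[OF enabled[unfolded lang_aug_snoc_iff]] by blast
  interpret verifier_simulation Sig dH q0 I So No \<sigma> N s f m pe
    using assms m pe by unfold_locales (auto simp: Tconf_def)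
  show ?thesis
    using reach_all_enabled[OF run_s] .
qed

theorem proposition2:
  fixes Q QH :: "'q set" and Sig :: "'e set"
    and d dH :: "'q \<Rightarrow> 'e \<Rightarrow> 'q option" and q0 :: 'q
    and n :: nat and So Sc :: "nat \<Rightarrow> 'e set" and No :: "nat \<Rightarrow> nat"
    and \<sigma> :: 'e and N :: nat
  assumes G: "dfa Q Sig d q0"
    and H: "dfa QH Sig dH q0"
    and sub: "sub_automaton QH dH Q d"
    and So_sub: "\<forall>i\<in>{1..n}. So i \<subseteq> Sig"
    and Sc_sub: "\<forall>i\<in>{1..n}. Sc i \<subseteq> Sig"
    and sigma_c: "\<sigma> \<in> (\<Union>i\<in>{1..n}. Sc i)"
    and N_def: "N = Max (No ` Ic n Sc \<sigma>)"
  shows "(\<forall>s \<in> lang dH q0. length s \<ge> N \<longrightarrow>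
            s @ [\<sigma>] \<in> lang d q0 - lang dH q0 \<longrightarrow>
            (\<forall>f \<in> Tconf Sig (Ic n Sc \<sigma>) So No s.
               \<exists>i \<in> Ic n Sc \<sigma>. f i @ [\<sigma>] \<notin> lang_aug Sig dH q0 (No i)))
     \<longleftrightarrow>
     \<not> (\<exists>q qs. (q, qs, N) \<in> verifier_reach Sig dH q0 (Ic n Sc \<sigma>) So No \<sigma> N \<and>
            \<sigma> \<in> Gam d q - Gam dH q \<and>
            (\<forall>i \<in> Ic n Sc \<sigma>. \<sigma> \<in> Gam_aug Sig dH (No i) (qs i)))"
proof -
  interpret verifier Sig dH q0 "Ic n Sc \<sigma>" So No \<sigma> N .
  have finite: "finite (Ic n Sc \<sigma>)"
    unfolding Ic_def by simp
  have No_le: "\<forall>i\<in>Ic n Sc \<sigma>. No i \<le> N"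
    unfolding N_def using finite by simp
  have bad_iff: "s @ [\<sigma>] \<in> lang d q0 - lang dH q0 \<longleftrightarrow> \<sigma> \<in> Gam d q - Gam dH q"
    if "run dH q0 s = Some q" for s q
    using that run_sub_automaton[OF sub that] by (auto simp: lang_snoc_iff)
  have violation_of_reach: "\<exists>s \<in> lang dH q0. N \<le> length s \<and> s @ [\<sigma>] \<in> lang d q0 - lang dH q0 \<and>
      (\<exists>f \<in> Tconf Sig (Ic n Sc \<sigma>) So No s. \<forall>i \<in> Ic n Sc \<sigma>. f i @ [\<sigma>] \<in> lang_aug Sig dH q0 (No i))"
    if "(q, qs, N) \<in> reach" "\<sigma> \<in> Gam d q - Gam dH q" "\<forall>i \<in> Ic n Sc \<sigma>. \<sigma> \<in> Gam_aug Sig dH (No i) (qs i)"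
    for q qs
    using conforming_tuple_of_reach[OF H that(1,3)] that(2) bad_iff unfolding lang_def by blast
  have reach_of_violation: "\<exists>q qs. (q, qs, N) \<in> reach \<and> \<sigma> \<in> Gam d q - Gam dH q \<and>
      (\<forall>i \<in> Ic n Sc \<sigma>. \<sigma> \<in> Gam_aug Sig dH (No i) (qs i))"
    if "s \<in> lang dH q0" "N \<le> length s" "s @ [\<sigma>] \<in> lang d q0 - lang dH q0"
      "f \<in> Tconf Sig (Ic n Sc \<sigma>) So No s" "\<forall>i \<in> Ic n Sc \<sigma>. f i @ [\<sigma>] \<in> lang_aug Sig dH q0 (No i)"
    for s f
    using that reach_of_conforming_tuple[OF finite No_le] run_lists[OF H] bad_iff
    unfolding lang_def by blast
  show ?thesis
    using violation_of_reach reach_of_violation by blast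
qed

end
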